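(* Assume $T\ge 3$. For every $z_k\in Z_\theta$ and every $t=0,1,\dots,T-3$, $\bar\epsilon_t(z_k)\le U^\epsilon_t(z_k)\le\bar U^\epsilon_t(\theta)$, where $$U^\epsilon_t(z_k)=\alpha^{T-1-t}\gamma_{T-1}\theta+2\theta\sum_{i=0}^{T-3-t}\sum_{n=1}^{T-1-t-i}\alpha^{n+i}\gamma_{t+i+n}\prod_{m=0}^{n-1}F_{t+i+m}\big(\max(\lambda_t(i),S_{t+i})+(m+1)\theta-s_{t+i+m+1}\big),$$ $$\bar U^\epsilon_t(\theta)=\alpha^{T-1-t}\gamma_{T-1}\theta+2\theta\sum_{i=0}^{T-3-t}\sum_{n=1}^{T-1-t-i}\alpha^{n+i}\gamma_{t+i+n}.$$
   Context: Model. Fix an integer horizon $T$, a discount factor $\alpha\in(0,1]$, and for $t=0,\dots,T-1$: unit ordering costs $c_t\in\mathbb R$, a salvage coefficient $c_T\in\mathbb R$, setup costs $K_t\ge 0$, functions $G_t:\mathbb R\to\mathbb R$, and independent nonnegative random demands $D_0,\dots,D_{T-1}$ with right-continuous distribution functions $F_t$ and finite means; all expectations appearing are assumed finite. Put $C_t(y)=(c_t-\alpha c_{t+1})y+G_t(y)+\alpha c_{t+1}E[D_t]$. Standing assumptions: (i) each $C_t$ is convex with $C_t(y)\to+\infty$ as $|y|\to\infty$; (ii) $K_t\ge \alpha K_{t+1}$ for $t=0,\dots,T-2$; (iii) there are constants $\gamma_t\ge 0$ with $|C_t(x)-C_t(y)|\le\gamma_t|x-y|$ for all $x,y$. Grid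 construction. Fix $\theta>0$, $z_m=m\theta$, $Z_\theta=\{z_m:m\in\mathbb Z\}$, $f_t(n)=F_t(z_{n+1})-F_t(z_n)$ ($n\ge -1$). $C^m_t=\min\{y: C_t(y)=\min_x C_t(x)\}$; with $z_{n_0}<C^m_t\le z_{n_0+1}$, $S^U_t=\min\{z_m\in Z_\theta: z_m\ge C^m_t,\ C_t(z_m)>C_t(z_{n_0})+K_t\}$. $s_{T-1}$ is a point with $s_{T-1}\le C^m_{T-1}$, $C_{T-1}(s_{T-1})=C_{T-1}(C^m_{T-1})+K_{T-1}$; $\bar I_{T-1}=s_{T-1}$. For $t=T-2,\dots,0$: $I_t=\max\{z_m\in Z_\theta: z_m<\min(\bar I_{t+1}-\theta,C^m_t)\}$, $\bar I_t=\max\{z_m\in Z_\theta: z_m\le I_t,\ C_t(z_m)>C_t(I_t)+K_t\}+\theta$. $H_{T-1}=C_{T-1}$, $S_{T-1}=C^m_{T-1}$; $V_t(y)=H_t(S_t)+K_t$ for $y<s_t$, $V_t(y)=H_t(y)$ for $y\ge s_t$. For $t=T-2,\dots,0$: $H_t(y)=C_t(y)+\alpha\sum_{n=-1}^\infty V_{t+1}(y-z_n)f_t(n)$; $S_t=\max\{z_m\in Z_\theta: I_t\le z_m\le S^U_t,\ H_t(z_m)=\min\{H_t(z_n):z_n\in Z_\theta, I_t\le z_n\le S^U_t\}\}$; $s_t=S_t$ if $K_t=0$, else $s_t=\min\{z_m\in Z_\theta:\bar I_t\le z_m\le S_t,\ H_t(z_m)\le H_t(S_t)+K_t\}$. Upper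 estimate functions. $\bar\psi_{T-1}(x,y)=\gamma_{T-1}x$; $\bar\varphi_{T-1}(x,y)=0$ if $y<s_{T-1}$ and $=\gamma_{T-1}x$ if $y\ge s_{T-1}$. For $t=0,\dots,T-2$, with $n$ the integer such that $z_{n-1}\le y-s_{t+1}<z_n$: $\bar\psi_t(x,y)=\gamma_tx$ if $y<s_{t+1}-\theta$, else $\bar\psi_t(x,y)=\gamma_tx+\alpha\sum_{m=-1}^{n-1}\bar\varphi_{t+1}(x,y-z_m)f_t(m)$; $\bar\varphi_t(x,y)=0$ if $y<s_t$, $=\bar\psi_t(y-s_t+\theta,y)$ if $y\ge s_t$ and $y-x<s_t$, $=\bar\psi_t(x,y)$ if $y\ge s_t$ and $y-x\ge s_t$. Bound $\bar\epsilon$. For $z_k\in Z_\theta$: $\bar\epsilon_{T-2}(z_k)=\alpha\gamma_{T-1}\theta$, and for $t=0,\dots,T-3$, $\bar\epsilon_t(z_k)=\alpha^{T-1-t}\gamma_{T-1}\theta+\sum_{i=0}^{T-3-t}2\alpha^i\big[\bar\psi_{t+i}(\theta,\max(\lambda_t(i),S_{t+i}))-\gamma_{t+i}\theta\big]$, where $\lambda_t(0)=z_k$ and $\lambda_t(i)=\max(\lambda_t(i-1),S_{t+i-1})+\theta$ for $i=1,\dots,T-3-t$. *)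

theory Defs
  imports "HOL-Probability.Probability"
begin

definition zg :: "real \<Rightarrow> int \<Rightarrow> real" where
  "zg \<theta> m = of_int m * \<theta>"

definition Fd :: "(nat \<Rightarrow> real measure) \<Rightarrow> nat \<Rightarrow> real \<Rightarrow> real" where
  "Fd D t x = measure (D t) {..x}"

definition Cfun :: "real \<Rightarrow> (nat \<Rightarrow> real) \<Rightarrow> (nat \<Rightarrow> real \<Rightarrow> real) \<Rightarrow> (nat \<Rightarrow> real measure)
                    \<Rightarrow> nat \<Rightarrow> real \<Rightarrow> real" where
  "Cfun \<alpha> c G D t y = (c t - \<alpha> * c (Suc t)) * y + G t y + \<alpha> * c (Suc t) * (\<integral>x. x \<partial>(D t))"

definition Cm :: "(nat \<Rightarrow> real \<Rightarrow> real) \<Rightarrow> nat \<Rightarrow> real" where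
  "Cm C t = Inf {y. \<forall>x. C t y \<le> C t x}"

definition n0 :: "(nat \<Rightarrow> real \<Rightarrow> real) \<Rightarrow> real \<Rightarrow> nat \<Rightarrow> int" where
  "n0 C \<theta> t = (THE n. zg \<theta> n < Cm C t \<and> Cm C t \<le> zg \<theta> (n + 1))"

definition SU :: "(nat \<Rightarrow> real \<Rightarrow> real) \<Rightarrow> (nat \<Rightarrow> real) \<Rightarrow> real \<Rightarrow> nat \<Rightarrow> real" where
  "SU C K \<theta> t = Inf {zg \<theta> m | m. zg \<theta> m \<ge> Cm C t \<and>
                        C t (zg \<theta> m) > C t (zg \<theta> (n0 C \<theta> t)) + K t}"

definition sTm1 :: "(nat \<Rightarrow> real \<Rightarrow> real) \<Rightarrow> (nat \<Rightarrow> real) \<Rightarrow> nat \<Rightarrow> real" where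
  "sTm1 C K T = (THE s. s \<le> Cm C (T - 1) \<and> C (T - 1) s = C (T - 1) (Cm C (T - 1)) + K (T - 1))"

text \<open>Backward recursion: index k corresponds to period t = T - 1 - k.
  The state is (H_t, S_t, s_t, Ibar_t).  The series sum_{n=-1}^infty is written
  with n = j - 1, j a natural number.\<close>
fun gridstate :: "real \<Rightarrow> real \<Rightarrow> nat \<Rightarrow> (nat \<Rightarrow> real \<Rightarrow> real) \<Rightarrow> (nat \<Rightarrow> real)
                  \<Rightarrow> (nat \<Rightarrow> real \<Rightarrow> real) \<Rightarrow> nat \<Rightarrow> (real \<Rightarrow> real) \<times> real \<times> real \<times> real" where
  "gridstate \<alpha> \<theta> T C K F 0 =
     (C (T - 1), Cm C (T - 1), sTm1 C K T, sTm1 C K T)"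
| "gridstate \<alpha> \<theta> T C K F (Suc k) =
     (case gridstate \<alpha> \<theta> T C K F k of (H', S', s', Ib') \<Rightarrow>
      (let t = T - 2 - k;
           V = (\<lambda>y. if y < s' then H' S' + K (Suc t) else H' y);
           f = (\<lambda>n. F t (zg \<theta> (n + 1)) - F t (zg \<theta> n));
           H = (\<lambda>y. C t y + \<alpha> * (\<Sum>j. V (y - zg \<theta> (int j - 1)) * f (int j - 1)));
           I = Sup {zg \<theta> m | m. zg \<theta> m < min (Ib' - \<theta>) (Cm C t)};
           Ib = Sup {zg \<theta> m | m. zg \<theta> m \<le> I \<and> C t (zg \<theta> m) > C t I + K t} + \<theta>;
           SUt = SU C K \<theta> t;
           Hmin = Inf {H (zg \<theta> n) | n. I \<le> zg \<theta> n \<and> zg \<theta> n \<le> SUt};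
           S = Sup {zg \<theta> m | m. I \<le> zg \<theta> m \<and> zg \<theta> m \<le> SUt \<and> H (zg \<theta> m) = Hmin};
           s = (if K t = 0 then S
                else Inf {zg \<theta> m | m. Ib \<le> zg \<theta> m \<and> zg \<theta> m \<le> S \<and> H (zg \<theta> m) \<le> H S + K t})
       in (H, S, s, Ib)))"

definition Hg :: "real \<Rightarrow> real \<Rightarrow> nat \<Rightarrow> (nat \<Rightarrow> real \<Rightarrow> real) \<Rightarrow> (nat \<Rightarrow> real)
                  \<Rightarrow> (nat \<Rightarrow> real \<Rightarrow> real) \<Rightarrow> nat \<Rightarrow> real \<Rightarrow> real" where
  "Hg \<alpha> \<theta> T C K F t = fst (gridstate \<alpha> \<theta> T C K F (T - 1 - t))"

definition Sg :: "real \<Rightarrow> real \<Rightarrow> nat \<Rightarrow> (nat \<Rightarrow> real \<Rightarrow> real) \<Rightarrow> (nat \<Rightarrow> real)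
                  \<Rightarrow> (nat \<Rightarrow> real \<Rightarrow> real) \<Rightarrow> nat \<Rightarrow> real" where
  "Sg \<alpha> \<theta> T C K F t = fst (snd (gridstate \<alpha> \<theta> T C K F (T - 1 - t)))"

definition sg :: "real \<Rightarrow> real \<Rightarrow> nat \<Rightarrow> (nat \<Rightarrow> real \<Rightarrow> real) \<Rightarrow> (nat \<Rightarrow> real)
                  \<Rightarrow> (nat \<Rightarrow> real \<Rightarrow> real) \<Rightarrow> nat \<Rightarrow> real" where
  "sg \<alpha> \<theta> T C K F t = fst (snd (snd (gridstate \<alpha> \<theta> T C K F (T - 1 - t))))"

text \<open>Backward recursion for (psibar_t, phibar_t), index k for t = T - 1 - k.
  s is the threshold sequence s_t, gamma the Lipschitz constants.\<close>
fun psiphi :: "real \<Rightarrow> real \<Rightarrow> nat \<Rightarrow> (nat \<Rightarrow> real) \<Rightarrow> (nat \<Rightarrow> real \<Rightarrow> real) \<Rightarrow> (nat \<Rightarrow> real)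
               \<Rightarrow> nat \<Rightarrow> (real \<Rightarrow> real \<Rightarrow> real) \<times> (real \<Rightarrow> real \<Rightarrow> real)" where
  "psiphi \<alpha> \<theta> T s F \<gamma> 0 =
     ((\<lambda>x y. \<gamma> (T - 1) * x),
      (\<lambda>x y. if y < s (T - 1) then 0 else \<gamma> (T - 1) * x))"
| "psiphi \<alpha> \<theta> T s F \<gamma> (Suc k) =
     (let t = T - 2 - k;
          \<phi>' = snd (psiphi \<alpha> \<theta> T s F \<gamma> k);
          f = (\<lambda>n. F t (zg \<theta> (n + 1)) - F t (zg \<theta> n));
          \<psi> = (\<lambda>x y. if y < s (Suc t) - \<theta> then \<gamma> t * x
                     else \<gamma> t * x + \<alpha> * (\<Sum>m\<in>{-1 .. \<lfloor>(y - s (Suc t)) / \<theta>\<rfloor>}. \<phi>' x (y - zg \<theta> m) * f m));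
          \<phi> = (\<lambda>x y. if y < s t then 0 else if y - x < s t then \<psi> (y - s t + \<theta>) y else \<psi> x y)
      in (\<psi>, \<phi>))"

definition psibar :: "real \<Rightarrow> real \<Rightarrow> nat \<Rightarrow> (nat \<Rightarrow> real) \<Rightarrow> (nat \<Rightarrow> real \<Rightarrow> real) \<Rightarrow> (nat \<Rightarrow> real)
                      \<Rightarrow> nat \<Rightarrow> real \<Rightarrow> real \<Rightarrow> real" where
  "psibar \<alpha> \<theta> T s F \<gamma> t = fst (psiphi \<alpha> \<theta> T s F \<gamma> (T - 1 - t))"

primrec lam :: "real \<Rightarrow> (nat \<Rightarrow> real) \<Rightarrow> nat \<Rightarrow> real \<Rightarrow> nat \<Rightarrow> real" where
  "lam \<theta> S t x 0 = x"
| "lam \<theta> S t x (Suc i) = max (lam \<theta> S t x i) (S (t + i)) + \<theta>"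

definition epsbar :: "real \<Rightarrow> real \<Rightarrow> nat \<Rightarrow> (nat \<Rightarrow> real \<Rightarrow> real) \<Rightarrow> (nat \<Rightarrow> real)
                      \<Rightarrow> (nat \<Rightarrow> real \<Rightarrow> real) \<Rightarrow> (nat \<Rightarrow> real) \<Rightarrow> nat \<Rightarrow> real \<Rightarrow> real" where
  "epsbar \<alpha> \<theta> T C K F \<gamma> t x =
     (let S = Sg \<alpha> \<theta> T C K F; s = sg \<alpha> \<theta> T C K F in
      if t = T - 2 then \<alpha> * \<gamma> (T - 1) * \<theta>
      else \<alpha> ^ (T - 1 - t) * \<gamma> (T - 1) * \<theta>
         + (\<Sum>i = 0 .. T - 3 - t. 2 * \<alpha> ^ i *
              (psibar \<alpha> \<theta> T s F \<gamma> (t + i) \<theta> (max (lam \<theta> S t x i) (S (t + i))) - \<gamma> (t + i) * \<theta>)))"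

definition Ueps :: "real \<Rightarrow> real \<Rightarrow> nat \<Rightarrow> (nat \<Rightarrow> real \<Rightarrow> real) \<Rightarrow> (nat \<Rightarrow> real)
                      \<Rightarrow> (nat \<Rightarrow> real \<Rightarrow> real) \<Rightarrow> (nat \<Rightarrow> real) \<Rightarrow> nat \<Rightarrow> real \<Rightarrow> real" where
  "Ueps \<alpha> \<theta> T C K F \<gamma> t x =
     (let S = Sg \<alpha> \<theta> T C K F; s = sg \<alpha> \<theta> T C K F in
      \<alpha> ^ (T - 1 - t) * \<gamma> (T - 1) * \<theta>
      + 2 * \<theta> * (\<Sum>i = 0 .. T - 3 - t. \<Sum>n = 1 .. T - 1 - t - i.
           \<alpha> ^ (n + i) * \<gamma> (t + i + n) *
           (\<Prod>m = 0 .. n - 1. F (t + i + m)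
               (max (lam \<theta> S t x i) (S (t + i)) + real (m + 1) * \<theta> - s (t + i + m + 1)))))"

definition Ubar :: "real \<Rightarrow> real \<Rightarrow> nat \<Rightarrow> (nat \<Rightarrow> real) \<Rightarrow> nat \<Rightarrow> real" where
  "Ubar \<alpha> \<theta> T \<gamma> t =
     \<alpha> ^ (T - 1 - t) * \<gamma> (T - 1) * \<theta>
     + 2 * \<theta> * (\<Sum>i = 0 .. T - 3 - t. \<Sum>n = 1 .. T - 1 - t - i. \<alpha> ^ (n + i) * \<gamma> (t + i + n))"

end

theory Submission
  imports Defs
begin

text \<open>
  On the grid Z_\<theta> both psibar_t(\<theta>, y) and phibar_t(\<theta>, y) are bounded by
  B_t(y) = \<gamma>_t \<theta> + \<alpha> F_t(y + \<theta> - s_{t+1}) B_{t+1}(y + \<theta>), with B_{T-1}(y) = \<gamma>_{T-1} \<theta>.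
  The sum over m in psibar_t weights values of phibar_{t+1}(\<theta>, -) at points below y + \<theta>
  by the increments of F_t; as B_{t+1} is nondecreasing, the sum telescopes to at most
  F_t(y + \<theta> - s_{t+1}) B_{t+1}(y + \<theta>).  In phibar_t the first argument \<theta> is replaced only
  when y - \<theta> < s_t \<le> y, which for grid points y and s_t means y = s_t, so it stays \<theta>.
  Unrolling B_t gives exactly the products in U^\<epsilon>_t, and bounding each F by 1 gives
  Ubar^\<epsilon>_t.

  That S_t, s_t and \<lambda>_t(i) are grid points follows from the coercivity of C_t, which makes
  every supremum and infimum in the construction an attained grid point.
\<close>

section \<open>Grid points\<close>

definition Zgrid :: "real \<Rightarrow> real set" where
  "Zgrid \<theta> = range (zg \<theta>)"

lemma zg_in_Zgrid [simp]: "zg \<theta> m \<in> Zgrid \<theta>"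
  by (simp add: Zgrid_def)

lemma theta_in_Zgrid: "\<theta> \<in> Zgrid \<theta>"
  using zg_in_Zgrid[of \<theta> 1] by (simp add: zg_def)

lemma Zgrid_add:
  assumes "a \<in> Zgrid \<theta>" "b \<in> Zgrid \<theta>"
  shows "a + b \<in> Zgrid \<theta>"
proof -
  obtain m n where "a = zg \<theta> m" "b = zg \<theta> n"
    using assms unfolding Zgrid_def by auto
  hence "a + b = zg \<theta> (m + n)" by (simp add: zg_def distrib_right)
  thus ?thesis by simp
qed

lemma Zgrid_diff:
  assumes "a \<in> Zgrid \<theta>" "b \<in> Zgrid \<theta>"
  shows "a - b \<in> Zgrid \<theta>"
proof -
  obtain m n where "a = zg \<theta> m" "b = zg \<theta> n"
    using assms unfolding Zgrid_def by auto
  hence "a - b = zg \<theta> (m - n)" by (simp add: zg_def left_diff_distrib)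
  thus ?thesis by simp
qed

lemma Zgrid_gap:
  assumes "\<theta> > 0" "a \<in> Zgrid \<theta>" "b \<in> Zgrid \<theta>" "a < b"
  shows "a + \<theta> \<le> b"
proof -
  obtain m n where m: "a = of_int m * \<theta>" and n: "b = of_int n * \<theta>"
    using assms(2,3) unfolding Zgrid_def zg_def by blast
  have "m < n"
    using assms(1,4) m n by (simp add: mult_less_cancel_right)
  hence "of_int m + 1 \<le> (of_int n :: real)"
    by linarith
  hence "(of_int m + 1) * \<theta> \<le> of_int n * \<theta>"
    using assms(1) by (simp add: mult_right_mono)
  thus ?thesis using m n by (simp add: algebra_simps)
qed

lemma zg_floor_le: "\<theta> > 0 \<Longrightarrow> zg \<theta> \<lfloor>v / \<theta>\<rfloor> \<le> v"
  unfolding zg_def by (metis floor_divide_lower)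

lemma zg_ceiling_ge: "\<theta> > 0 \<Longrightarrow> v \<le> zg \<theta> \<lceil>v / \<theta>\<rceil>"
  unfolding zg_def by (metis ceiling_divide_upper)

lemma finite_Zgrid_interval:
  assumes "\<theta> > 0"
  shows "finite {m. a \<le> zg \<theta> m \<and> zg \<theta> m \<le> b}"
proof (rule finite_subset)
  show "{m. a \<le> zg \<theta> m \<and> zg \<theta> m \<le> b} \<subseteq> {\<lceil>a / \<theta>\<rceil> .. \<lfloor>b / \<theta>\<rfloor>}"
    using assms by (auto simp: zg_def ceiling_le_iff le_floor_iff field_simps)
qed simp

lemma Zgrid_Sup_mem:
  assumes "\<theta> > 0" "A \<subseteq> Zgrid \<theta>" "A \<noteq> {}" "bdd_above A"
  shows "Sup A \<in> A"
proof -
  obtain a where a: "a \<in> A" "Sup A - \<theta> < a"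
    using less_cSupD[OF assms(3), of "Sup A - \<theta>"] assms(1) by auto
  have "b \<le> a" if "b \<in> A" for b
  proof (rule ccontr)
    assume "\<not> b \<le> a"
    hence "a < b" by simp
    hence "a + \<theta> \<le> b" using Zgrid_gap[OF assms(1)] a(1) that assms(2) by blast
    moreover have "b \<le> Sup A" using assms(4) that by (simp add: cSup_upper)
    ultimately show False using a(2) by simp
  qed
  hence "Sup A = a" using a(1) by (intro cSup_eq_maximum)
  thus ?thesis using a(1) by simp
qed

lemma Zgrid_Inf_mem:
  assumes "\<theta> > 0" "A \<subseteq> Zgrid \<theta>" "A \<noteq> {}" "bdd_below A"
  shows "Inf A \<in> A"
proof -
  have "uminus ` A \<subseteq> Zgrid \<theta>"
    using assms(2) Zgrid_diff[OF zg_in_Zgrid[of \<theta> 0]] by (force simp: zg_def)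
  moreover have "bdd_above (uminus ` A)"
    using assms(4) by (simp add: bdd_above_uminus)
  ultimately have "Sup (uminus ` A) \<in> uminus ` A"
    using Zgrid_Sup_mem[OF assms(1)] assms(3) by blast
  thus ?thesis by (force simp: Inf_real_def)
qed

lemma coercive_eventually_greater:
  fixes f :: "real \<Rightarrow> real"
  assumes "filterlim f at_top at_infinity"
  shows "eventually (\<lambda>y. c < f y) at_bot" "eventually (\<lambda>y. c < f y) at_top"
  using assms filterlim_mono[OF assms order_refl at_bot_le_at_infinity]
    filterlim_mono[OF assms order_refl at_top_le_at_infinity]
  by (simp_all add: filterlim_at_top_dense)

lemma coercive_Zgrid_below:
  fixes f :: "real \<Rightarrow> real"
  assumes "\<theta> > 0" "filterlim f at_top at_infinity"
  obtains m where "zg \<theta> m \<le> a" "c < f (zg \<theta> m)"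
proof -
  obtain b where b: "\<And>y. y \<le> b \<Longrightarrow> c < f y"
    using coercive_eventually_greater(1)[OF assms(2)] by (auto simp: eventually_at_bot_linorder)
  have "zg \<theta> \<lfloor>min a b / \<theta>\<rfloor> \<le> min a b" by (rule zg_floor_le[OF assms(1)])
  thus ?thesis using b that by (meson min.boundedE)
qed

lemma coercive_Zgrid_above:
  fixes f :: "real \<Rightarrow> real"
  assumes "\<theta> > 0" "filterlim f at_top at_infinity"
  obtains m where "a \<le> zg \<theta> m" "c < f (zg \<theta> m)"
proof -
  obtain b where b: "\<And>y. b \<le> y \<Longrightarrow> c < f y"
    using coercive_eventually_greater(2)[OF assms(2)] by (auto simp: eventually_at_top_linorder)
  have "max a b \<le> zg \<theta> \<lceil>max a b / \<theta>\<rceil>" by (rule zg_ceiling_ge[OF assms(1)])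
  thus ?thesis using b that by (meson max.boundedE)
qed

section \<open>The thresholds S_t and s_t lie on the grid\<close>

lemma Sup_Zgrid_less_mem:
  assumes "\<theta> > 0"
  shows "Sup {zg \<theta> m |m. zg \<theta> m < v} \<in> {zg \<theta> m |m. zg \<theta> m < v}"
proof (rule Zgrid_Sup_mem[OF assms])
  have "zg \<theta> (\<lfloor>v / \<theta>\<rfloor> - 1) < v"
    using zg_floor_le[OF assms, of v] assms by (simp add: zg_def algebra_simps)
  thus "{zg \<theta> m |m. zg \<theta> m < v} \<noteq> {}" by blast
  show "bdd_above {zg \<theta> m |m. zg \<theta> m < v}"
    by (rule bdd_aboveI[of _ v]) auto
qed auto

lemma Sup_superlevel_Zgrid_add_theta_le:
  fixes f :: "real \<Rightarrow> real"
  assumes "\<theta> > 0" "filterlim f at_top at_infinity" "I \<in> Zgrid \<theta>" "0 \<le> K"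
  shows "Sup {zg \<theta> m |m. zg \<theta> m \<le> I \<and> f I + K < f (zg \<theta> m)} + \<theta> \<le> I"
proof -
  define A where "A = {zg \<theta> m |m. zg \<theta> m \<le> I \<and> f I + K < f (zg \<theta> m)}"
  have "Sup A \<in> A"
  proof (rule Zgrid_Sup_mem[OF assms(1)])
    obtain m where "zg \<theta> m \<le> I" "f I + K < f (zg \<theta> m)"
      using coercive_Zgrid_below[OF assms(1,2)] by blast
    thus "A \<noteq> {}" unfolding A_def by blast
    show "bdd_above A" unfolding A_def by (rule bdd_aboveI[of _ I]) auto
  qed (auto simp: A_def)
  hence "Sup A \<in> Zgrid \<theta>" "Sup A \<le> I" "f I + K < f (Sup A)"
    unfolding A_def by auto
  moreover from this have "Sup A \<noteq> I" using assms(4) by auto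
  ultimately show ?thesis
    using Zgrid_gap[OF assms(1) _ assms(3)] unfolding A_def by simp
qed

lemma Cm_le_SU:
  assumes "\<theta> > 0" "filterlim (C t) at_top at_infinity"
  shows "Cm C t \<le> SU C K \<theta> t"
  unfolding SU_def
proof (rule cInf_greatest)
  obtain m where "Cm C t \<le> zg \<theta> m" "C t (zg \<theta> (n0 C \<theta> t)) + K t < C t (zg \<theta> m)"
    using coercive_Zgrid_above[OF assms] by blast
  thus "{zg \<theta> m |m. Cm C t \<le> zg \<theta> m \<and> C t (zg \<theta> (n0 C \<theta> t)) + K t < C t (zg \<theta> m)} \<noteq> {}"
    by blast
qed auto

lemma Sup_argmin_Zgrid_mem:
  fixes H :: "real \<Rightarrow> real"
  assumes "\<theta> > 0" "I \<in> Zgrid \<theta>" "I \<le> U"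
  defines "A \<equiv> {zg \<theta> m |m. I \<le> zg \<theta> m \<and> zg \<theta> m \<le> U
                  \<and> H (zg \<theta> m) = Inf {H (zg \<theta> n) |n. I \<le> zg \<theta> n \<and> zg \<theta> n \<le> U}}"
  shows "Sup A \<in> A"
proof (rule Zgrid_Sup_mem[OF assms(1)])
  define N where "N = {n. I \<le> zg \<theta> n \<and> zg \<theta> n \<le> U}"
  define X where "X = (\<lambda>n. H (zg \<theta> n)) ` N"
  have X_eq: "{H (zg \<theta> n) |n. I \<le> zg \<theta> n \<and> zg \<theta> n \<le> U} = X"
    unfolding X_def N_def by blast
  have fin: "finite X"
    unfolding X_def N_def using finite_Zgrid_interval[OF assms(1)] by (rule finite_imageI)
  obtain i where "I = zg \<theta> i"
    using assms(2) unfolding Zgrid_def by blast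
  hence ne: "X \<noteq> {}"
    using assms(3) unfolding X_def N_def by blast
  have "Inf X \<in> X"
    using Min_in[OF fin ne] cInf_eq_Min[OF fin ne] by simp
  then obtain n where "n \<in> N" "Inf X = H (zg \<theta> n)"
    unfolding X_def by blast
  thus "A \<noteq> {}"
    unfolding A_def X_eq N_def by force
  show "bdd_above A"
    unfolding A_def by (rule bdd_aboveI[of _ U]) blast
  show "A \<subseteq> Zgrid \<theta>"
    unfolding A_def using zg_in_Zgrid by blast
qed

lemma Inf_sublevel_Zgrid_mem:
  fixes H :: "real \<Rightarrow> real"
  assumes "\<theta> > 0" "S \<in> Zgrid \<theta>" "L \<le> S" "0 \<le> K"
  defines "B \<equiv> {zg \<theta> m |m. L \<le> zg \<theta> m \<and> zg \<theta> m \<le> S \<and> H (zg \<theta> m) \<le> H S + K}"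
  shows "Inf B \<in> B"
proof (rule Zgrid_Inf_mem[OF assms(1)])
  show "B \<noteq> {}"
    using assms(2-4) unfolding B_def Zgrid_def by auto
  show "bdd_below B" unfolding B_def by (rule bdd_belowI[of _ L]) auto
qed (auto simp: B_def)

lemma Sg_sg_in_Zgrid:
  assumes "\<theta> > 0" "t + 2 \<le> T" "0 \<le> K t" "filterlim (C t) at_top at_infinity"
  shows "Sg \<alpha> \<theta> T C K F t \<in> Zgrid \<theta> \<and> sg \<alpha> \<theta> T C K F t \<in> Zgrid \<theta>"
proof -
  define k where "k = T - 2 - t"
  have k: "T - 1 - t = Suc k" "T - 2 - k = t"
    using assms(2) unfolding k_def by auto
  obtain H' S' s' Ib' where prev: "gridstate \<alpha> \<theta> T C K F k = (H', S', s', Ib')"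
    by (metis prod.exhaust)
  define V where "V = (\<lambda>y. if y < s' then H' S' + K (Suc t) else H' y)"
  define f where "f = (\<lambda>n. F t (zg \<theta> (n + 1)) - F t (zg \<theta> n))"
  define H where "H = (\<lambda>y. C t y + \<alpha> * (\<Sum>j. V (y - zg \<theta> (int j - 1)) * f (int j - 1)))"
  define I where "I = Sup {zg \<theta> m |m. zg \<theta> m < min (Ib' - \<theta>) (Cm C t)}"
  define Ib where "Ib = Sup {zg \<theta> m |m. zg \<theta> m \<le> I \<and> C t (zg \<theta> m) > C t I + K t} + \<theta>"
  define U where "U = SU C K \<theta> t"
  define S where "S = Sup {zg \<theta> m |m. I \<le> zg \<theta> m \<and> zg \<theta> m \<le> U
                   \<and> H (zg \<theta> m) = Inf {H (zg \<theta> n) |n. I \<le> zg \<theta> n \<and> zg \<theta> n \<le> U}}"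
  define s where "s = (if K t = 0 then S
                       else Inf {zg \<theta> m |m. Ib \<le> zg \<theta> m \<and> zg \<theta> m \<le> S \<and> H (zg \<theta> m) \<le> H S + K t})"
  have state: "gridstate \<alpha> \<theta> T C K F (T - 1 - t) = (H, S, s, Ib)"
    unfolding k(1) s_def S_def U_def Ib_def I_def H_def f_def V_def
    by (simp only: gridstate.simps prev Let_def prod.case k(2))
  have "I \<in> {zg \<theta> m |m. zg \<theta> m < min (Ib' - \<theta>) (Cm C t)}"
    unfolding I_def by (rule Sup_Zgrid_less_mem[OF assms(1)])
  hence I: "I \<in> Zgrid \<theta>" "I < Cm C t"
    by auto
  have "I \<le> U"
    using I(2) Cm_le_SU[of \<theta> C t K, OF assms(1,4)] unfolding U_def by simp
  hence S: "S \<in> Zgrid \<theta>" "I \<le> S"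
    using Sup_argmin_Zgrid_mem[OF assms(1) I(1), of U H] unfolding S_def by auto
  have "Ib \<le> I"
    using Sup_superlevel_Zgrid_add_theta_le[OF assms(1,4) I(1) assms(3)] unfolding Ib_def by simp
  hence "s \<in> Zgrid \<theta>"
    using S Inf_sublevel_Zgrid_mem[OF assms(1) S(1) _ assms(3), of Ib H] unfolding s_def by auto
  thus ?thesis
    using S(1) state unfolding Sg_def sg_def by simp
qed

section \<open>A closed-form bound for psibar\<close>

lemma sum_telescope_int:
  fixes G :: "int \<Rightarrow> 'a::ab_group_add"
  assumes "a \<le> N + 1"
  shows "(\<Sum>m\<in>{a..N}. G (m + 1) - G m) = G (N + 1) - G a"
proof -
  have "a - 1 \<le> N" using assms by simp
  thus ?thesis
  proof (induction N rule: int_ge_induct)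
    case (step N)
    have "{a..N + 1} = insert (N + 1) {a..N}"
      using step.hyps by auto
    thus ?case using step by simp
  qed simp
qed

lemma sum_mult_increments_le:
  fixes g G :: "int \<Rightarrow> real"
  assumes "mono G" "0 \<le> G a" "0 \<le> b" "a \<le> N + 1" "\<And>m. m \<in> {a..N} \<Longrightarrow> g m \<le> b"
  shows "(\<Sum>m\<in>{a..N}. g m * (G (m + 1) - G m)) \<le> b * G (N + 1)"
proof -
  have "(\<Sum>m\<in>{a..N}. g m * (G (m + 1) - G m)) \<le> (\<Sum>m\<in>{a..N}. b * (G (m + 1) - G m))"
    using assms(5) by (intro sum_mono mult_right_mono) (auto intro!: monoD[OF assms(1)])
  also have "\<dots> = b * (G (N + 1) - G a)"
    by (simp add: sum_distrib_left[symmetric] sum_telescope_int[OF assms(4)])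
  also have "\<dots> \<le> b * G (N + 1)"
    using assms(2,3) by (simp add: right_diff_distrib)
  finally show ?thesis .
qed

definition Fprod :: "real \<Rightarrow> (nat \<Rightarrow> real) \<Rightarrow> (nat \<Rightarrow> real \<Rightarrow> real) \<Rightarrow> nat \<Rightarrow> real \<Rightarrow> nat \<Rightarrow> real" where
  "Fprod \<theta> s F t y n = (\<Prod>m<n. F (t + m) (y + real (m + 1) * \<theta> - s (t + m + 1)))"

text \<open>The bound B_t of the proof idea, unrolled.\<close>

definition psi_bound :: "real \<Rightarrow> real \<Rightarrow> nat \<Rightarrow> (nat \<Rightarrow> real) \<Rightarrow> (nat \<Rightarrow> real \<Rightarrow> real)
    \<Rightarrow> (nat \<Rightarrow> real) \<Rightarrow> nat \<Rightarrow> real \<Rightarrow> real" where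
  "psi_bound \<alpha> \<theta> T s F \<gamma> t y =
     \<gamma> t * \<theta> + \<theta> * (\<Sum>n<T - 1 - t. \<alpha> ^ Suc n * \<gamma> (t + Suc n) * Fprod \<theta> s F t y (Suc n))"

lemma Fprod_Suc: "Fprod \<theta> s F t y (Suc n) = F t (y + \<theta> - s (Suc t)) * Fprod \<theta> s F (Suc t) (y + \<theta>) n"
  unfolding Fprod_def prod.lessThan_Suc_shift by (simp add: algebra_simps)

lemma psi_bound_last: "psi_bound \<alpha> \<theta> T s F \<gamma> (T - 1) y = \<gamma> (T - 1) * \<theta>"
  unfolding psi_bound_def by simp

lemma psi_bound_Suc:
  assumes "Suc t < T"
  shows "psi_bound \<alpha> \<theta> T s F \<gamma> t y
       = \<gamma> t * \<theta> + \<alpha> * F t (y + \<theta> - s (Suc t)) * psi_bound \<alpha> \<theta> T s F \<gamma> (Suc t) (y + \<theta>)"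
proof -
  have horizon: "T - 1 - t = Suc (T - 1 - Suc t)" using assms by simp
  show ?thesis
    unfolding psi_bound_def horizon sum.lessThan_Suc_shift Fprod_Suc
    by (simp add: Fprod_def sum_distrib_left algebra_simps)
qed

context
  fixes \<alpha> \<theta> :: real and T :: nat and s :: "nat \<Rightarrow> real"
    and F :: "nat \<Rightarrow> real \<Rightarrow> real" and \<gamma> :: "nat \<Rightarrow> real"
  assumes theta_pos: "\<theta> > 0" and alpha_nonneg: "\<alpha> \<ge> 0"
    and F_nonneg: "\<And>t x. t < T \<Longrightarrow> 0 \<le> F t x"
    and F_mono: "\<And>t. t < T \<Longrightarrow> mono (F t)"
    and gamma_nonneg: "\<And>t. t < T \<Longrightarrow> 0 \<le> \<gamma> t"
begin

lemma Fprod_nonneg: "t + n \<le> T \<Longrightarrow> 0 \<le> Fprod \<theta> s F t y n"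
  unfolding Fprod_def using F_nonneg by (intro prod_nonneg) auto

lemma Fprod_mono: "t + n \<le> T \<Longrightarrow> y \<le> y' \<Longrightarrow> Fprod \<theta> s F t y n \<le> Fprod \<theta> s F t y' n"
  unfolding Fprod_def using F_nonneg by (intro prod_mono) (auto intro!: monoD[OF F_mono])

lemma psi_bound_nonneg: "t < T \<Longrightarrow> 0 \<le> psi_bound \<alpha> \<theta> T s F \<gamma> t y"
  unfolding psi_bound_def using theta_pos alpha_nonneg gamma_nonneg
  by (intro add_nonneg_nonneg mult_nonneg_nonneg sum_nonneg Fprod_nonneg) auto

lemma psi_bound_mono:
  "t < T \<Longrightarrow> y \<le> y' \<Longrightarrow> psi_bound \<alpha> \<theta> T s F \<gamma> t y \<le> psi_bound \<alpha> \<theta> T s F \<gamma> t y'"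
  unfolding psi_bound_def using theta_pos alpha_nonneg gamma_nonneg
  by (intro add_left_mono mult_left_mono sum_mono Fprod_mono) auto

lemma psi_sum_le_psi_bound:
  fixes \<phi> :: "real \<Rightarrow> real \<Rightarrow> real"
  assumes "Suc t < T"
    and \<phi>_le: "\<And>y. y \<in> Zgrid \<theta> \<Longrightarrow> \<phi> \<theta> y \<le> psi_bound \<alpha> \<theta> T s F \<gamma> (Suc t) y"
    and y: "y \<in> Zgrid \<theta>" "s (Suc t) - \<theta> \<le> y"
  shows "(\<Sum>m\<in>{-1 .. \<lfloor>(y - s (Suc t)) / \<theta>\<rfloor>}. \<phi> \<theta> (y - zg \<theta> m) * (F t (zg \<theta> (m + 1)) - F t (zg \<theta> m)))
         \<le> psi_bound \<alpha> \<theta> T s F \<gamma> (Suc t) (y + \<theta>) * F t (y + \<theta> - s (Suc t))"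
proof -
  define N where "N = \<lfloor>(y - s (Suc t)) / \<theta>\<rfloor>"
  define b where "b = psi_bound \<alpha> \<theta> T s F \<gamma> (Suc t) (y + \<theta>)"
  have t: "t < T" using assms(1) by simp
  have b_nonneg: "0 \<le> b"
    unfolding b_def using assms(1) by (rule psi_bound_nonneg)
  have mono_G: "mono (\<lambda>n. F t (zg \<theta> n))"
    using theta_pos by (intro monoI) (auto simp: zg_def intro!: monoD[OF F_mono[OF t]])
  have "-1 \<le> (y - s (Suc t)) / \<theta>"
    using theta_pos y(2) by (simp add: field_simps)
  hence "-1 \<le> N + 1" unfolding N_def by linarith
  have "\<phi> \<theta> (y - zg \<theta> m) \<le> b" if "m \<in> {-1..N}" for m
  proof -
    have "(-1) * \<theta> \<le> of_int m * \<theta>"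
      using that theta_pos by (intro mult_right_mono) auto
    hence "y - zg \<theta> m \<le> y + \<theta>"
      by (simp add: zg_def)
    hence "psi_bound \<alpha> \<theta> T s F \<gamma> (Suc t) (y - zg \<theta> m) \<le> b"
      unfolding b_def using assms(1) by (intro psi_bound_mono)
    thus ?thesis
      using \<phi>_le[OF Zgrid_diff[OF y(1) zg_in_Zgrid[of \<theta> m]]] by linarith
  qed
  hence "(\<Sum>m\<in>{-1..N}. \<phi> \<theta> (y - zg \<theta> m) * (F t (zg \<theta> (m + 1)) - F t (zg \<theta> m)))
         \<le> b * F t (zg \<theta> (N + 1))"
    using F_nonneg[OF t] b_nonneg \<open>-1 \<le> N + 1\<close>
    by (intro sum_mult_increments_le[OF mono_G]) auto
  also have "\<dots> \<le> b * F t (y + \<theta> - s (Suc t))"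
  proof (intro mult_left_mono monoD[OF F_mono[OF t]] b_nonneg)
    have "zg \<theta> N \<le> y - s (Suc t)"
      unfolding N_def by (rule zg_floor_le[OF theta_pos])
    thus "zg \<theta> (N + 1) \<le> y + \<theta> - s (Suc t)"
      by (simp add: zg_def algebra_simps)
  qed
  finally show ?thesis unfolding N_def b_def .
qed

lemma psiphi_le_psi_bound:
  assumes s_grid: "\<And>t. t + 2 \<le> T \<Longrightarrow> s t \<in> Zgrid \<theta>"
    and "k < T" "y \<in> Zgrid \<theta>"
  shows "fst (psiphi \<alpha> \<theta> T s F \<gamma> k) \<theta> y \<le> psi_bound \<alpha> \<theta> T s F \<gamma> (T - 1 - k) y
       \<and> snd (psiphi \<alpha> \<theta> T s F \<gamma> k) \<theta> y \<le> psi_bound \<alpha> \<theta> T s F \<gamma> (T - 1 - k) y"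
  using assms(2,3)
proof (induction k arbitrary: y)
  case 0
  thus ?case
    using theta_pos gamma_nonneg[of "T - 1"] psi_bound_last[of \<alpha> \<theta> T s F \<gamma> y] by simp
next
  case (Suc k)
  define t where "t = T - 2 - k"
  have t: "T - 1 - Suc k = t" "T - 1 - k = Suc t" "t + 2 \<le> T" "Suc t < T" "t < T"
    using Suc.prems(1) unfolding t_def by auto
  define \<phi>' where "\<phi>' = snd (psiphi \<alpha> \<theta> T s F \<gamma> k)"
  define \<psi> where "\<psi> = (\<lambda>x y. if y < s (Suc t) - \<theta> then \<gamma> t * x
      else \<gamma> t * x + \<alpha> * (\<Sum>m\<in>{-1 .. \<lfloor>(y - s (Suc t)) / \<theta>\<rfloor>}.
                             \<phi>' x (y - zg \<theta> m) * (F t (zg \<theta> (m + 1)) - F t (zg \<theta> m))))"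
  define \<phi> where "\<phi> = (\<lambda>x y. if y < s t then 0 else if y - x < s t then \<psi> (y - s t + \<theta>) y else \<psi> x y)"
  have step: "psiphi \<alpha> \<theta> T s F \<gamma> (Suc k) = (\<psi>, \<phi>)"
    unfolding \<phi>_def \<psi>_def \<phi>'_def t_def by (simp only: psiphi.simps Let_def)
  let ?B = "psi_bound \<alpha> \<theta> T s F \<gamma>"
  have \<phi>'_le: "\<And>y. y \<in> Zgrid \<theta> \<Longrightarrow> \<phi>' \<theta> y \<le> ?B (Suc t) y"
    using Suc.IH Suc.prems(1) t(2) unfolding \<phi>'_def by auto
  have \<psi>_le: "\<psi> \<theta> y \<le> ?B t y" if "y \<in> Zgrid \<theta>" for y
  proof (cases "y < s (Suc t) - \<theta>")
    case True
    have "0 \<le> \<alpha> * F t (y + \<theta> - s (Suc t)) * ?B (Suc t) (y + \<theta>)"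
      using alpha_nonneg F_nonneg[OF t(5)] psi_bound_nonneg[OF t(4)] by simp
    thus ?thesis using True psi_bound_Suc[OF t(4)] unfolding \<psi>_def by simp
  next
    case False
    have "\<psi> \<theta> y \<le> \<gamma> t * \<theta> + \<alpha> * (?B (Suc t) (y + \<theta>) * F t (y + \<theta> - s (Suc t)))"
      using False psi_sum_le_psi_bound[where \<phi> = \<phi>', OF t(4) \<phi>'_le that] alpha_nonneg
      unfolding \<psi>_def by (simp add: mult_left_mono)
    thus ?thesis using psi_bound_Suc[OF t(4)] by (simp add: algebra_simps)
  qed
  have "\<phi> \<theta> y \<le> ?B t y"
  proof -
    consider "y < s t" | "y = s t" | "s t + \<theta> \<le> y"
      using Zgrid_gap[OF theta_pos s_grid[OF t(3)] Suc.prems(2)] by fastforce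
    thus ?thesis
      by cases (use psi_bound_nonneg[OF t(5)] \<psi>_le[OF Suc.prems(2)] theta_pos in \<open>auto simp: \<phi>_def\<close>)
  qed
  thus ?case using \<psi>_le[OF Suc.prems(2)] step t(1) by simp
qed

lemma psibar_le_psi_bound:
  assumes "\<And>t. t + 2 \<le> T \<Longrightarrow> s t \<in> Zgrid \<theta>" "t < T" "y \<in> Zgrid \<theta>"
  shows "psibar \<alpha> \<theta> T s F \<gamma> t \<theta> y \<le> psi_bound \<alpha> \<theta> T s F \<gamma> t y"
proof -
  have "T - 1 - (T - 1 - t) = t" using assms(2) by simp
  thus ?thesis
    using psiphi_le_psi_bound[OF assms(1) _ assms(3), of "T - 1 - t"] assms(2)
    unfolding psibar_def by simp
qed

end

lemma pow_mult_psi_bound_excess: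
  "\<alpha> ^ i * (psi_bound \<alpha> \<theta> T s F \<gamma> t y - \<gamma> t * \<theta>)
   = \<theta> * (\<Sum>n = 1 .. T - 1 - t. \<alpha> ^ (n + i) * \<gamma> (t + n) *
              (\<Prod>m = 0 .. n - 1. F (t + m) (y + real (m + 1) * \<theta> - s (t + m + 1))))"
proof -
  have "(\<Sum>n = 1 .. T - 1 - t. \<alpha> ^ (n + i) * \<gamma> (t + n) *
           (\<Prod>m = 0 .. n - 1. F (t + m) (y + real (m + 1) * \<theta> - s (t + m + 1))))
      = (\<Sum>n<T - 1 - t. \<alpha> ^ (Suc n + i) * \<gamma> (t + Suc n) *
           (\<Prod>m = 0 .. n. F (t + m) (y + real (m + 1) * \<theta> - s (t + m + 1))))"
    by (subst image_Suc_lessThan[symmetric], subst sum.reindex) auto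
  also have "\<dots> = \<alpha> ^ i * (\<Sum>n<T - 1 - t. \<alpha> ^ Suc n * \<gamma> (t + Suc n) * Fprod \<theta> s F t y (Suc n))"
    unfolding sum_distrib_left Fprod_def
    by (intro sum.cong refl) (simp add: power_add atLeast0AtMost lessThan_Suc_atMost)
  finally show ?thesis
    unfolding psi_bound_def by (simp add: algebra_simps)
qed

lemma lam_in_Zgrid:
  assumes "x \<in> Zgrid \<theta>" "\<And>j. j < i \<Longrightarrow> S (t + j) \<in> Zgrid \<theta>"
  shows "lam \<theta> S t x i \<in> Zgrid \<theta>"
  using assms(2)
proof (induction i)
  case (Suc i)
  thus ?case by (simp add: max_def Zgrid_add theta_in_Zgrid)
qed (simp add: assms(1))

lemma epsbar_le_Ueps:
  assumes "\<theta> > 0" "\<alpha> \<ge> 0" "\<And>t x. t < T \<Longrightarrow> 0 \<le> F t x" "\<And>t. t < T \<Longrightarrow> mono (F t)"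
    "\<And>t. t < T \<Longrightarrow> 0 \<le> \<gamma> t"
    and grid: "\<And>t. t + 2 \<le> T \<Longrightarrow> Sg \<alpha> \<theta> T C K F t \<in> Zgrid \<theta> \<and> sg \<alpha> \<theta> T C K F t \<in> Zgrid \<theta>"
    and "x \<in> Zgrid \<theta>" "t + 3 \<le> T"
  shows "epsbar \<alpha> \<theta> T C K F \<gamma> t x \<le> Ueps \<alpha> \<theta> T C K F \<gamma> t x"
proof -
  define S where "S = Sg \<alpha> \<theta> T C K F"
  define s where "s = sg \<alpha> \<theta> T C K F"
  have "2 * \<alpha> ^ i * (psibar \<alpha> \<theta> T s F \<gamma> (t + i) \<theta> (max (lam \<theta> S t x i) (S (t + i))) - \<gamma> (t + i) * \<theta>)
      \<le> 2 * \<theta> * (\<Sum>n = 1 .. T - 1 - t - i. \<alpha> ^ (n + i) * \<gamma> (t + i + n) *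
           (\<Prod>m = 0 .. n - 1. F (t + i + m)
               (max (lam \<theta> S t x i) (S (t + i)) + real (m + 1) * \<theta> - s (t + i + m + 1))))"
    if "i \<in> {0 .. T - 3 - t}" for i
  proof -
    define Y where "Y = max (lam \<theta> S t x i) (S (t + i))"
    have "lam \<theta> S t x i \<in> Zgrid \<theta>" "S (t + i) \<in> Zgrid \<theta>"
      using lam_in_Zgrid[OF assms(7)] grid that assms(8) unfolding S_def by auto
    hence "Y \<in> Zgrid \<theta>" unfolding Y_def by (simp add: max_def)
    hence "psibar \<alpha> \<theta> T s F \<gamma> (t + i) \<theta> Y \<le> psi_bound \<alpha> \<theta> T s F \<gamma> (t + i) Y"
      using psibar_le_psi_bound[OF assms(1-5)] grid that assms(8) unfolding s_def by simp
    hence "\<alpha> ^ i * (psibar \<alpha> \<theta> T s F \<gamma> (t + i) \<theta> Y - \<gamma> (t + i) * \<theta>)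
        \<le> \<alpha> ^ i * (psi_bound \<alpha> \<theta> T s F \<gamma> (t + i) Y - \<gamma> (t + i) * \<theta>)"
      using assms(2) by (simp add: mult_left_mono)
    thus ?thesis
      unfolding pow_mult_psi_bound_excess Y_def by (simp add: diff_diff_left)
  qed
  hence "(\<Sum>i = 0 .. T - 3 - t. 2 * \<alpha> ^ i *
           (psibar \<alpha> \<theta> T s F \<gamma> (t + i) \<theta> (max (lam \<theta> S t x i) (S (t + i))) - \<gamma> (t + i) * \<theta>))
      \<le> 2 * \<theta> * (\<Sum>i = 0 .. T - 3 - t. \<Sum>n = 1 .. T - 1 - t - i. \<alpha> ^ (n + i) * \<gamma> (t + i + n) *
           (\<Prod>m = 0 .. n - 1. F (t + i + m)
               (max (lam \<theta> S t x i) (S (t + i)) + real (m + 1) * \<theta> - s (t + i + m + 1))))"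
    unfolding sum_distrib_left by (rule sum_mono)
  moreover have "t \<noteq> T - 2" using assms(8) by simp
  ultimately show ?thesis
    unfolding epsbar_def Ueps_def Let_def S_def s_def by simp
qed

lemma Ueps_le_Ubar:
  assumes "\<theta> \<ge> 0" "\<alpha> \<ge> 0" "\<And>t x. t < T \<Longrightarrow> 0 \<le> F t x" "\<And>t x. t < T \<Longrightarrow> F t x \<le> 1"
    "\<And>t. t < T \<Longrightarrow> 0 \<le> \<gamma> t"
  shows "Ueps \<alpha> \<theta> T C K F \<gamma> t x \<le> Ubar \<alpha> \<theta> T \<gamma> t"
  unfolding Ueps_def Ubar_def Let_def
proof (intro add_left_mono mult_left_mono sum_mono)
  fix i n assume "n \<in> {1 .. T - 1 - t - i}"
  hence "t + i + n < T" by auto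
  thus "\<alpha> ^ (n + i) * \<gamma> (t + i + n) * (\<Prod>m = 0 .. n - 1. F (t + i + m)
          (max (lam \<theta> (Sg \<alpha> \<theta> T C K F) t x i) (Sg \<alpha> \<theta> T C K F (t + i)) + real (m + 1) * \<theta>
            - sg \<alpha> \<theta> T C K F (t + i + m + 1)))
        \<le> \<alpha> ^ (n + i) * \<gamma> (t + i + n)"
    using assms(2-5) by (intro mult_left_le prod_le_1) auto
qed (use assms(1) in simp)

lemma Fd_nonneg: "0 \<le> Fd D t x"
  unfolding Fd_def by simp

lemma Fd_le_1: "prob_space (D t) \<Longrightarrow> Fd D t x \<le> 1"
  unfolding Fd_def by (rule prob_space.prob_le_1)

lemma mono_Fd:
  assumes "finite_measure (D t)" "sets (D t) = sets borel"
  shows "mono (Fd D t)"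
  unfolding Fd_def using assms by (intro monoI finite_measure.finite_measure_mono) auto

theorem theorem4p5:
  fixes \<alpha> \<theta> :: real and T :: nat
    and c K :: "nat \<Rightarrow> real" and G :: "nat \<Rightarrow> real \<Rightarrow> real"
    and D :: "nat \<Rightarrow> real measure" and \<gamma> :: "nat \<Rightarrow> real"
  assumes T3: "T \<ge> 3"
    and alpha: "0 < \<alpha>" "\<alpha> \<le> 1"
    and theta: "\<theta> > 0"
    and Kpos: "\<And>t. t < T \<Longrightarrow> K t \<ge> 0"
    and Kdec: "\<And>t. t + 2 \<le> T \<Longrightarrow> K t \<ge> \<alpha> * K (Suc t)"
    and Dprob: "\<And>t. t < T \<Longrightarrow> prob_space (D t)"
    and Dborel: "\<And>t. t < T \<Longrightarrow> sets (D t) = sets borel"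
    and Dnonneg: "\<And>t. t < T \<Longrightarrow> AE x in D t. 0 \<le> x"
    and Dmean: "\<And>t. t < T \<Longrightarrow> integrable (D t) (\<lambda>x. x)"
    and Cconvex: "\<And>t. t < T \<Longrightarrow> convex_on UNIV (Cfun \<alpha> c G D t)"
    and Ccoercive: "\<And>t. t < T \<Longrightarrow> filterlim (Cfun \<alpha> c G D t) at_top at_infinity"
    and gamma: "\<And>t. t < T \<Longrightarrow> \<gamma> t \<ge> 0"
    and Clip: "\<And>t x y. t < T \<Longrightarrow> \<bar>Cfun \<alpha> c G D t x - Cfun \<alpha> c G D t y\<bar> \<le> \<gamma> t * \<bar>x - y\<bar>"
  shows "\<forall>k::int. \<forall>t. t \<le> T - 3 \<longrightarrow>
           epsbar \<alpha> \<theta> T (Cfun \<alpha> c G D) K (Fd D) \<gamma> t (zg \<theta> k)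
             \<le> Ueps \<alpha> \<theta> T (Cfun \<alpha> c G D) K (Fd D) \<gamma> t (zg \<theta> k)
         \<and> Ueps \<alpha> \<theta> T (Cfun \<alpha> c G D) K (Fd D) \<gamma> t (zg \<theta> k) \<le> Ubar \<alpha> \<theta> T \<gamma> t"
proof (intro allI impI)
  fix k :: int and t :: nat
  assume "t \<le> T - 3"
  hence t: "t + 3 \<le> T" using T3 by simp
  have F: "\<And>t x. t < T \<Longrightarrow> 0 \<le> Fd D t x" "\<And>t x. t < T \<Longrightarrow> Fd D t x \<le> 1"
    "\<And>t. t < T \<Longrightarrow> mono (Fd D t)"
    using Fd_nonneg Fd_le_1[OF Dprob] mono_Fd[OF prob_space.finite_measure[OF Dprob] Dborel] by auto
  have grid: "\<And>t. t + 2 \<le> T \<Longrightarrow> Sg \<alpha> \<theta> T (Cfun \<alpha> c G D) K (Fd D) t \<in> Zgrid \<theta>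
                                 \<and> sg \<alpha> \<theta> T (Cfun \<alpha> c G D) K (Fd D) t \<in> Zgrid \<theta>"
    using Sg_sg_in_Zgrid[OF theta] Kpos Ccoercive by simp
  show "epsbar \<alpha> \<theta> T (Cfun \<alpha> c G D) K (Fd D) \<gamma> t (zg \<theta> k)
          \<le> Ueps \<alpha> \<theta> T (Cfun \<alpha> c G D) K (Fd D) \<gamma> t (zg \<theta> k)
        \<and> Ueps \<alpha> \<theta> T (Cfun \<alpha> c G D) K (Fd D) \<gamma> t (zg \<theta> k) \<le> Ubar \<alpha> \<theta> T \<gamma> t"
    using epsbar_le_Ueps[OF theta _ F(1,3) gamma grid zg_in_Zgrid t]
      Ueps_le_Ubar[of \<theta> \<alpha> T "Fd D" \<gamma>] theta alpha F(1,2) gamma by simp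
qed

end
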